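(* Let $G$ be an $m$-player $n_0$-action normal-form game with payoff tensors $M_1,\dots,M_m$, let $\epsilon>0$, and let $\mathcal{G}=\mathcal{G}(G)$ be the $(m+1)$-player Markov game described in the context. For any $i\in[m]$, any state $s$, any $h\in[H]$, and any product distribution $q$ over $\bar{\mathcal{A}}_{-i}:=\prod_{j\in[m+1]\setminus\{i\}}\mathcal{A}_j$, it holds that $\max_{a_i'\in\mathcal{A}_i}\mathbb{E}_{\mathbf{a}\sim q}[R_{i,h}(s,(a_i',\mathbf{a}))]\ge0$.
   Context: The Markov game $\mathcal{G}(G)$: horizon $H$ is the power of $2$ with $n_0\le H<2n_0$; players $1,\dots,m$ have action sets $\mathcal{A}_1=\dots=\mathcal{A}_m=[n_0]$; player $m+1$ (the ``kibitzer'') has action set $\mathcal{A}_{m+1}=\{(j,a_j): j\in[m],a_j\in\mathcal{A}_j\}$; $\bar{\mathcal{A}}=\prod_{j=1}^{m+1}\mathcal{A}_j$; there is a single state $\mathfrak{s}$. For $h\in[H]$ and action profile $\mathbf{a}=(a_1,\dots,a_{m+1})$ with $a_{m+1}=(j',a_{j'}')$, the reward to player $j\in[m+1]$ is $R_{j,h}(\mathfrak{s},\mathbf{a})=\bar R_{j,h}(\mathfrak{s},\mathbf{a})+\frac1H2^{-3\lceil\log(1/\epsilon)\rceil}\mathrm{enc}(\mathbf{a})$, where $\mathrm{enc}(\mathbf{a})=\sum_{k}2^{-k}b_k\in[0,1]$ for $(b_1,b_2,\dots)$ a binary encoding of $\mathbf{a}$, and $\bar R_{j,h}(\mathfrak{s},\mathbf{a})=0$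 if $j\notin\{j',m+1\}$; $\bar R_{j,h}(\mathfrak{s},\mathbf{a})=\frac1H\big((M_j)_{a_1,\dots,a_m}-(M_j)_{a_1,\dots,a_{j'}',\dots,a_m}\big)$ if $j=j'$; and $\bar R_{m+1,h}(\mathfrak{s},\mathbf{a})=\frac1H\big((M_{j'})_{a_1,\dots,a_{j'}',\dots,a_m}-(M_{j'})_{a_1,\dots,a_m}\big)$, where $(a_1,\dots,a_{j'}',\dots,a_m)$ denotes $(a_1,\dots,a_m)$ with the $j'$-th coordinate replaced by $a_{j'}'$. *)

theory Defs
  imports Complex_Main "HOL-Library.FuncSet"
begin

text \<open>Players of the base game are indexed 0..m-1, actions 0..n0-1; the kibitzer is
  player index m.  An action profile of the Markov game is a pair (x, k) where
  x :: nat \<Rightarrow> nat gives the actions of players 0..m-1 (an element of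
  PiE {0..<m} (\<lambda>_. {0..<n0})) and k = (j', b) is the kibitzer's action.\<close>

definition horizon :: "nat \<Rightarrow> nat" where
  "horizon n0 = (LEAST H. (\<exists>k. H = 2 ^ k) \<and> n0 \<le> H)"

definition kib_actions :: "nat \<Rightarrow> nat \<Rightarrow> (nat \<times> nat) set" where
  "kib_actions m n0 = {(j, b). j < m \<and> b < n0}"

definition base_profiles :: "nat \<Rightarrow> nat \<Rightarrow> (nat \<Rightarrow> nat) set" where
  "base_profiles m n0 = PiE {0..<m} (\<lambda>_. {0..<n0})"

definition enc_scale :: "real \<Rightarrow> real" where
  "enc_scale eps = 2 powr (- 3 * real_of_int \<lceil>log 2 (1 / eps)\<rceil>)"

definition Rbar :: "nat \<Rightarrow> nat \<Rightarrow> (nat \<Rightarrow> (nat \<Rightarrow> nat) \<Rightarrow> real) \<Rightarrow> nat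
    \<Rightarrow> (nat \<Rightarrow> nat) \<times> (nat \<times> nat) \<Rightarrow> real" where
  "Rbar n0 m M j a =
     (case a of (x, (j', b)) \<Rightarrow>
        if j = j' then (M j x - M j (x(j' := b))) / real (horizon n0)
        else if j = m then (M j' (x(j' := b)) - M j' x) / real (horizon n0)
        else 0)"

text \<open>Reward of player j at step h in state s (single state, type unit).
  enc is the (fixed) binary encoding of action profiles into [0,1].\<close>
definition R :: "nat \<Rightarrow> nat \<Rightarrow> real \<Rightarrow> (nat \<Rightarrow> (nat \<Rightarrow> nat) \<Rightarrow> real)
    \<Rightarrow> ((nat \<Rightarrow> nat) \<times> (nat \<times> nat) \<Rightarrow> real) \<Rightarrow> nat \<Rightarrow> nat \<Rightarrow> unit
    \<Rightarrow> (nat \<Rightarrow> nat) \<times> (nat \<times> nat) \<Rightarrow> real" where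
  "R n0 m eps M enc j h s a =
     Rbar n0 m M j a + (1 / real (horizon n0)) * enc_scale eps * enc a"

definition exp_reward :: "nat \<Rightarrow> nat \<Rightarrow> real \<Rightarrow> (nat \<Rightarrow> (nat \<Rightarrow> nat) \<Rightarrow> real)
    \<Rightarrow> ((nat \<Rightarrow> nat) \<times> (nat \<times> nat) \<Rightarrow> real) \<Rightarrow> nat \<Rightarrow> nat \<Rightarrow> unit
    \<Rightarrow> (nat \<Rightarrow> nat \<Rightarrow> real) \<Rightarrow> (nat \<times> nat \<Rightarrow> real) \<Rightarrow> nat \<Rightarrow> real" where
  "exp_reward n0 m eps M enc i h s q qk a' =
     (\<Sum>x\<in>PiE ({0..<m} - {i}) (\<lambda>_. {0..<n0}). \<Sum>k\<in>kib_actions m n0.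
        (\<Prod>j\<in>{0..<m} - {i}. q j (x j)) * qk k * R n0 m eps M enc i h s (x(i := a'), k))"

end

theory Submission
  imports Defs
begin

text \<open>Let player \<open>i\<close> play a best response \<open>a\<close> to the other base players in the base game
  alone.  Whatever the kibitzer does, the expected regret part of \<open>i\<close>'s reward is then
  nonnegative: if the kibitzer names another player it is \<open>0\<close>, and if it names \<open>i\<close> with
  deviation \<open>b\<close> it equals the gain of \<open>a\<close> over \<open>b\<close> against the opponents' mixture.
  The encoding bonus is nonnegative as well.\<close>

definition opp_prob :: "nat \<Rightarrow> nat \<Rightarrow> (nat \<Rightarrow> nat \<Rightarrow> real) \<Rightarrow> (nat \<Rightarrow> nat) \<Rightarrow> real" where
  "opp_prob m i q x = (\<Prod>j\<in>{0..<m} - {i}. q j (x j))"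

definition base_exp_payoff :: "nat \<Rightarrow> nat \<Rightarrow> (nat \<Rightarrow> (nat \<Rightarrow> nat) \<Rightarrow> real) \<Rightarrow> nat
    \<Rightarrow> (nat \<Rightarrow> nat \<Rightarrow> real) \<Rightarrow> nat \<Rightarrow> real" where
  "base_exp_payoff n0 m M i q a =
     (\<Sum>x\<in>PiE ({0..<m} - {i}) (\<lambda>_. {0..<n0}). opp_prob m i q x * M i (x(i := a)))"

lemma Rbar_other_deviator:
  assumes "i \<noteq> m" "j \<noteq> i"
  shows "Rbar n0 m M i (x, (j, b)) = 0"
  using assms by (simp add: Rbar_def)

lemma Rbar_self_deviation:
  "Rbar n0 m M i (x(i := a), (i, b)) = (M i (x(i := a)) - M i (x(i := b))) / real (horizon n0)"
  by (simp add: Rbar_def)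

lemma exp_Rbar_self_deviation:
  "(\<Sum>x\<in>PiE ({0..<m} - {i}) (\<lambda>_. {0..<n0}). opp_prob m i q x * Rbar n0 m M i (x(i := a), (i, b)))
     = (base_exp_payoff n0 m M i q a - base_exp_payoff n0 m M i q b) / real (horizon n0)"
  unfolding base_exp_payoff_def Rbar_self_deviation
  by (simp add: sum_divide_distrib[symmetric] sum_subtractf right_diff_distrib)

lemma exp_Rbar_nonneg_at_best_response:
  assumes "i \<noteq> m" and "k \<in> kib_actions m n0"
    and best: "\<And>b. b < n0 \<Longrightarrow> base_exp_payoff n0 m M i q b \<le> base_exp_payoff n0 m M i q a"
  shows "(\<Sum>x\<in>PiE ({0..<m} - {i}) (\<lambda>_. {0..<n0}). opp_prob m i q x * Rbar n0 m M i (x(i := a), k)) \<ge> 0"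
proof -
  obtain j b where k: "k = (j, b)" and "b < n0"
    using assms(2) by (auto simp: kib_actions_def)
  show ?thesis
  proof (cases "j = i")
    case True
    then show ?thesis
      using best[OF \<open>b < n0\<close>] by (simp add: k exp_Rbar_self_deviation)
  next
    case False
    then show ?thesis using assms(1) by (simp add: k Rbar_other_deviator)
  qed
qed

lemma exp_reward_split:
  "exp_reward n0 m eps M enc i h s q qk a =
     (\<Sum>k\<in>kib_actions m n0. qk k *
        (\<Sum>x\<in>PiE ({0..<m} - {i}) (\<lambda>_. {0..<n0}). opp_prob m i q x * Rbar n0 m M i (x(i := a), k)))
   + (\<Sum>x\<in>PiE ({0..<m} - {i}) (\<lambda>_. {0..<n0}). \<Sum>k\<in>kib_actions m n0.
        opp_prob m i q x * qk k * (enc_scale eps / real (horizon n0) * enc (x(i := a), k)))"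
proof -
  have "(\<Sum>k\<in>kib_actions m n0. qk k *
          (\<Sum>x\<in>PiE ({0..<m} - {i}) (\<lambda>_. {0..<n0}). opp_prob m i q x * Rbar n0 m M i (x(i := a), k)))
      = (\<Sum>x\<in>PiE ({0..<m} - {i}) (\<lambda>_. {0..<n0}). \<Sum>k\<in>kib_actions m n0.
          opp_prob m i q x * qk k * Rbar n0 m M i (x(i := a), k))"
    by (subst sum.swap) (simp add: sum_distrib_left mult_ac)
  then show ?thesis
    unfolding exp_reward_def R_def opp_prob_def[symmetric]
    by (simp add: sum.distrib[symmetric] distrib_left mult_ac)
qed

lemma exp_reward_nonneg_at_best_response:
  assumes "i < m" "a < n0"
    and best: "\<And>b. b < n0 \<Longrightarrow> base_exp_payoff n0 m M i q b \<le> base_exp_payoff n0 m M i q a"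
    and enc_nonneg: "\<And>x k. x \<in> base_profiles m n0 \<Longrightarrow> k \<in> kib_actions m n0 \<Longrightarrow> 0 \<le> enc (x, k)"
    and q_nonneg: "\<And>j b. j < m \<Longrightarrow> j \<noteq> i \<Longrightarrow> 0 \<le> q j b"
    and qk_nonneg: "\<And>k. 0 \<le> qk k"
  shows "exp_reward n0 m eps M enc i h s q qk a \<ge> 0"
proof -
  have regret_part: "(\<Sum>k\<in>kib_actions m n0. qk k *
      (\<Sum>x\<in>PiE ({0..<m} - {i}) (\<lambda>_. {0..<n0}). opp_prob m i q x * Rbar n0 m M i (x(i := a), k))) \<ge> 0"
  proof (rule sum_nonneg)
    fix k assume "k \<in> kib_actions m n0"
    with exp_Rbar_nonneg_at_best_response[OF _ this best] \<open>i < m\<close> show "0 \<le> qk k *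
      (\<Sum>x\<in>PiE ({0..<m} - {i}) (\<lambda>_. {0..<n0}). opp_prob m i q x * Rbar n0 m M i (x(i := a), k))"
      by (simp add: qk_nonneg)
  qed
  have "(\<Sum>x\<in>PiE ({0..<m} - {i}) (\<lambda>_. {0..<n0}). \<Sum>k\<in>kib_actions m n0.
      opp_prob m i q x * qk k * (enc_scale eps / real (horizon n0) * enc (x(i := a), k))) \<ge> 0"
  proof (intro sum_nonneg mult_nonneg_nonneg)
    fix x k assume x: "x \<in> PiE ({0..<m} - {i}) (\<lambda>_. {0..<n0})" and k: "k \<in> kib_actions m n0"
    have "x(i := a) \<in> base_profiles m n0"
      using x assms(1,2) by (auto simp: base_profiles_def PiE_iff extensional_def)
    then show "0 \<le> enc (x(i := a), k)" using enc_nonneg k by blast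
    show "0 \<le> opp_prob m i q x" unfolding opp_prob_def using q_nonneg by (intro prod_nonneg) auto
  qed (simp_all add: qk_nonneg enc_scale_def)
  with regret_part show ?thesis by (simp add: exp_reward_split)
qed

theorem lemmaC8:
  fixes n0 m :: nat and eps :: real
    and M :: "nat \<Rightarrow> (nat \<Rightarrow> nat) \<Rightarrow> real"
    and enc :: "(nat \<Rightarrow> nat) \<times> (nat \<times> nat) \<Rightarrow> real"
    and i h :: nat and s :: unit
    and q :: "nat \<Rightarrow> nat \<Rightarrow> real" and qk :: "nat \<times> nat \<Rightarrow> real"
  assumes "1 \<le> n0" and "1 \<le> m" and "eps > 0"
    and "\<And>x k. x \<in> base_profiles m n0 \<Longrightarrow> k \<in> kib_actions m n0 \<Longrightarrow> 0 \<le> enc (x, k) \<and> enc (x, k) \<le> 1"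
    and "i < m" and "h \<in> {1..horizon n0}"
    and "\<And>j b. j < m \<Longrightarrow> j \<noteq> i \<Longrightarrow> 0 \<le> q j b"
    and "\<And>j. j < m \<Longrightarrow> j \<noteq> i \<Longrightarrow> (\<Sum>b<n0. q j b) = 1"
    and "\<And>k. 0 \<le> qk k"
    and "(\<Sum>k\<in>kib_actions m n0. qk k) = 1"
  shows "Max ((\<lambda>a'. exp_reward n0 m eps M enc i h s q qk a') ` {0..<n0}) \<ge> 0"
proof -
  let ?payoff = "base_exp_payoff n0 m M i q"
  have "Max (?payoff ` {0..<n0}) \<in> ?payoff ` {0..<n0}"
    using \<open>1 \<le> n0\<close> by (intro Max_in) auto
  then obtain a where a: "a < n0" "?payoff a = Max (?payoff ` {0..<n0})" by auto
  then have "?payoff b \<le> ?payoff a" if "b < n0" for b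
    using that by simp
  then have "exp_reward n0 m eps M enc i h s q qk a \<ge> 0"
    using exp_reward_nonneg_at_best_response[OF \<open>i < m\<close> \<open>a < n0\<close>] assms(4,7,9) by blast
  with \<open>a < n0\<close> show ?thesis
    using \<open>1 \<le> n0\<close> by (auto simp: Max_ge_iff)
qed

end
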